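(* Let $k,d$ be positive integers, let $D$ be a totally coloured digraph and let $A\subseteq V(D)$ be a $(3kd,d)$-connected subset of $D$. Let $S$ be a set of colours with $|S|\leq k$ and let $a_1,\dots,a_k\in A$ be vertices such that no $a_i$ has a colour in $S$ and $a_1,\dots,a_k$ have pairwise different colours. Then there is a rainbow path $P$ in $D$ from $a_1$ to $a_k$ of length at most $kd$ which passes through each of $a_1,\dots,a_k$ and has no vertex or edge with a colour in $S$.
   Context: Digraphs are finite, without loops and without multiple edges (an edge may appear in both directions). A path is a sequence of distinct vertices $x_1,\dots,x_t$ such that each $x_ix_{i+1}$ is a directed edge; its length is its number of edges. A total colouring assigns a colour to every vertex and every edge. A path (or subgraph) is rainbow if all its vertices and edges have pairwise different colours. For a totally coloured digraph $D$, a set $A\subseteq V(D)$ is $(k,d)$-connected in $D$ if for every set $S$ of at most $k-1$ colours and all vertices $x,y\in A$, there is a rainbow path from $x$ to $y$ of length at most $d$ that internally avoids $S$, i.e. none of its edges and none of its vertices other than $x$ and $y$ has a colour in $S$. *)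

theory Defs
  imports Main
begin

text \<open>A total colouring is a pair of functions: cv colours vertices, ce colours edges.\<close>

definition digraph :: "'a set \<Rightarrow> ('a \<times> 'a) set \<Rightarrow> bool" where
  "digraph V E \<longleftrightarrow> finite V \<and> E \<subseteq> V \<times> V \<and> (\<forall>x. (x, x) \<notin> E)"

definition path_edges :: "'a list \<Rightarrow> ('a \<times> 'a) list" where
  "path_edges p = zip p (tl p)"

definition is_path :: "'a set \<Rightarrow> ('a \<times> 'a) set \<Rightarrow> 'a list \<Rightarrow> bool" where
  "is_path V E p \<longleftrightarrow> p \<noteq> [] \<and> distinct p \<and> set p \<subseteq> V \<and> set (path_edges p) \<subseteq> E"

definition path_from_to :: "'a set \<Rightarrow> ('a \<times> 'a) set \<Rightarrow> 'a list \<Rightarrow> 'a \<Rightarrow> 'a \<Rightarrow> bool" where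
  "path_from_to V E p x y \<longleftrightarrow> is_path V E p \<and> hd p = x \<and> last p = y"

definition path_length :: "'a list \<Rightarrow> nat" where
  "path_length p = length p - 1"

definition rainbow :: "('a \<Rightarrow> 'c) \<Rightarrow> ('a \<times> 'a \<Rightarrow> 'c) \<Rightarrow> 'a list \<Rightarrow> bool" where
  "rainbow cv ce p \<longleftrightarrow> distinct (map cv p @ map ce (path_edges p))"

definition internally_avoids ::
  "('a \<Rightarrow> 'c) \<Rightarrow> ('a \<times> 'a \<Rightarrow> 'c) \<Rightarrow> 'c set \<Rightarrow> 'a \<Rightarrow> 'a \<Rightarrow> 'a list \<Rightarrow> bool" where
  "internally_avoids cv ce S x y p \<longleftrightarrow>
     (\<forall>e \<in> set (path_edges p). ce e \<notin> S) \<and> (\<forall>v \<in> set p - {x, y}. cv v \<notin> S)"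

definition kd_connected ::
  "'a set \<Rightarrow> ('a \<times> 'a) set \<Rightarrow> ('a \<Rightarrow> 'c) \<Rightarrow> ('a \<times> 'a \<Rightarrow> 'c) \<Rightarrow> nat \<Rightarrow> nat \<Rightarrow> 'a set \<Rightarrow> bool" where
  "kd_connected V E cv ce k d A \<longleftrightarrow>
     (\<forall>S. finite S \<and> card S \<le> k - 1 \<longrightarrow>
        (\<forall>x \<in> A. \<forall>y \<in> A. \<exists>p. path_from_to V E p x y \<and> rainbow cv ce p
            \<and> path_length p \<le> d \<and> internally_avoids cv ce S x y p))"

end

theory Submission
  imports Defs
begin

text \<open>The paths from a_1 to a_j are built greedily, j = 1, ..., k. Each step appends a
  short path from a_j to a_{j+1} that avoids, as colours, everything already used by the
  current path, the forbidden set S and the colours of a_{j+2}, ..., a_k. The current path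
  has at most 2(j-1)d + 1 colours, so at most 3kd - 1 colours have to be avoided, which
  (3kd,d)-connectivity permits. Avoiding the used colours keeps the concatenation a rainbow
  path, and avoiding the colours of the later a_i keeps them available for later steps.\<close>

definition path_colours :: "('a \<Rightarrow> 'c) \<Rightarrow> ('a \<times> 'a \<Rightarrow> 'c) \<Rightarrow> 'a list \<Rightarrow> 'c set" where
  "path_colours cv ce p = cv ` set p \<union> ce ` set (path_edges p)"

lemma path_edges_simps [simp]:
  "path_edges [] = []"
  "path_edges [x] = []"
  "path_edges (x # y # zs) = (x, y) # path_edges (y # zs)"
  by (simp_all add: path_edges_def)

lemma length_path_edges: "length (path_edges p) = length p - 1"
  by (simp add: path_edges_def)

lemma path_edges_append:
  "p \<noteq> [] \<Longrightarrow> path_edges (p @ q) = path_edges p @ path_edges (last p # q)"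
  by (induction p rule: induct_list012) auto

lemma card_path_colours_le: "card (path_colours cv ce p) \<le> 2 * path_length p + 1"
proof -
  have "card (path_colours cv ce p) = card (set (map cv p @ map ce (path_edges p)))"
    by (simp add: path_colours_def)
  also have "\<dots> \<le> length p + (length p - 1)"
    using card_length by (metis length_append length_map length_path_edges)
  finally show ?thesis
    by (simp add: path_length_def)
qed

lemma path_from_to_append:
  assumes P: "path_from_to V E P x y" and Q: "path_from_to V E (y # qs) y z"
    and "qs \<noteq> []" and disjoint: "set P \<inter> set qs = {}"
  shows "path_from_to V E (P @ qs) x z"
    and "path_length (P @ qs) = path_length P + path_length (y # qs)"
proof -
  have "P \<noteq> []" and "last P = y"
    using P unfolding path_from_to_def is_path_def by auto
  then have "path_edges (P @ qs) = path_edges P @ path_edges (y # qs)"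
    using path_edges_append by metis
  then show "path_from_to V E (P @ qs) x z"
    using P Q \<open>qs \<noteq> []\<close> disjoint unfolding path_from_to_def is_path_def by auto
  show "path_length (P @ qs) = path_length P + path_length (y # qs)"
    using \<open>P \<noteq> []\<close> by (cases P) (simp_all add: path_length_def)
qed

lemma rainbow_append:
  assumes "rainbow cv ce P" "rainbow cv ce (y # qs)" "P \<noteq> []" "last P = y"
    and disjoint: "path_colours cv ce P \<inter> (cv ` set qs \<union> ce ` set (path_edges (y # qs))) = {}"
  shows "rainbow cv ce (P @ qs)"
proof -
  have "path_edges (P @ qs) = path_edges P @ path_edges (y # qs)"
    using assms(3,4) path_edges_append by metis
  moreover have "set (map cv P @ map ce (path_edges P))
      \<inter> set (map cv qs @ map ce (path_edges (y # qs))) = {}"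
    using disjoint by (simp add: path_colours_def)
  ultimately show ?thesis
    using assms(1,2) unfolding rainbow_def by auto
qed

text \<open>Internal avoidance exempts only the endpoints of Q; as y already lies on P, every
  colour that Q adds is either cv z or lies outside both the colours of P and R.\<close>

lemma rainbow_path_append:
  assumes P: "path_from_to V E P x y" "rainbow cv ce P"
    and Q: "path_from_to V E Q y z" "rainbow cv ce Q"
    and Q_avoids: "internally_avoids cv ce (path_colours cv ce P \<union> R) y z Q"
    and z_fresh: "cv z \<notin> path_colours cv ce P"
  shows "path_from_to V E (P @ tl Q) x z"
    and "rainbow cv ce (P @ tl Q)"
    and "path_length (P @ tl Q) = path_length P + path_length Q"
    and "set (P @ tl Q) = set P \<union> set Q"
    and "path_colours cv ce (P @ tl Q) \<subseteq> path_colours cv ce P \<union> {cv z} \<union> - R"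
proof -
  define T where "T = path_colours cv ce P \<union> R"
  obtain qs where Q_eq: "Q = y # qs"
    using Q(1) unfolding path_from_to_def is_path_def by (metis list.collapse)
  have P_ne: "P \<noteq> []" and last_P: "last P = y" and y_in_P: "y \<in> set P"
    using P(1) unfolding path_from_to_def is_path_def by auto
  have "z \<noteq> y"
    using z_fresh y_in_P by (auto simp: path_colours_def)
  then have qs_ne: "qs \<noteq> []"
    using Q(1) Q_eq unfolding path_from_to_def by auto
  have qs_colour: "v = z \<or> cv v \<notin> T" if "v \<in> set qs" for v
    using Q(1) Q_avoids Q_eq that
    unfolding internally_avoids_def T_def path_from_to_def is_path_def by auto
  have "ce e \<notin> T" if "e \<in> set (path_edges Q)" for e
    using Q_avoids that unfolding internally_avoids_def T_def by auto
  with qs_colour have new_colours: "cv ` set qs \<union> ce ` set (path_edges Q) \<subseteq> {cv z} \<union> - T"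
    by blast
  have "set P \<inter> set qs = {}"
    using qs_colour z_fresh unfolding T_def path_colours_def by fastforce
  then show "path_from_to V E (P @ tl Q) x z"
    and "path_length (P @ tl Q) = path_length P + path_length Q"
    using path_from_to_append[OF P(1) _ qs_ne] Q(1) Q_eq by simp_all
  have "c \<notin> path_colours cv ce P" if "c \<in> cv ` set qs \<union> ce ` set (path_edges Q)" for c
  proof -
    have "c = cv z \<or> c \<notin> T"
      using new_colours that by blast
    then show ?thesis
      using z_fresh unfolding T_def by blast
  qed
  then have "path_colours cv ce P \<inter> (cv ` set qs \<union> ce ` set (path_edges (y # qs))) = {}"
    using Q_eq by blast
  with rainbow_append[OF P(2) _ P_ne last_P] Q(2) Q_eq show "rainbow cv ce (P @ tl Q)"
    by simp
  show "set (P @ tl Q) = set P \<union> set Q"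
    using Q_eq y_in_P by auto
  have "path_colours cv ce (P @ tl Q)
      = path_colours cv ce P \<union> (cv ` set qs \<union> ce ` set (path_edges Q))"
    using path_edges_append[OF P_ne] last_P Q_eq by (auto simp: path_colours_def)
  then show "path_colours cv ce (P @ tl Q) \<subseteq> path_colours cv ce P \<union> {cv z} \<union> - R"
    using new_colours unfolding T_def by blast
qed

lemma kd_connected_extend_path:
  assumes conn: "kd_connected V E cv ce m d A"
    and P: "path_from_to V E P x y" "rainbow cv ce P"
    and "y \<in> A" "z \<in> A"
    and "finite R" and card_le: "card (path_colours cv ce P) + card R < m"
    and z_fresh: "cv z \<notin> path_colours cv ce P"
  obtains P' where "path_from_to V E P' x z" "rainbow cv ce P'"
    and "path_length P' \<le> path_length P + d"
    and "set P \<subseteq> set P'" "z \<in> set P'"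
    and "path_colours cv ce P' \<subseteq> path_colours cv ce P \<union> {cv z} \<union> - R"
proof -
  define T where "T = path_colours cv ce P \<union> R"
  have "finite T"
    using \<open>finite R\<close> by (simp add: T_def path_colours_def)
  moreover have "card T \<le> m - 1"
    using card_Un_le[of "path_colours cv ce P" R] card_le by (simp add: T_def)
  ultimately obtain Q where Q: "path_from_to V E Q y z" "rainbow cv ce Q"
    and "path_length Q \<le> d" and "internally_avoids cv ce T y z Q"
    using conn \<open>y \<in> A\<close> \<open>z \<in> A\<close> unfolding kd_connected_def by blast
  note append = rainbow_path_append[OF P Q _ z_fresh, of R]
  have "last Q = z"
    using Q(1) by (simp add: path_from_to_def)
  then have "z \<in> set Q"
    using Q(1) by (auto simp: path_from_to_def is_path_def)
  then show ?thesis
    using that[of "P @ tl Q"] append \<open>path_length Q \<le> d\<close> \<open>internally_avoids cv ce T y z Q\<close>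
    unfolding T_def by auto
qed

lemma colour_budget:
  fixes j k d :: nat
  assumes "1 \<le> j" "Suc j \<le> k" "0 < d"
  shows "(2 * ((j - 1) * d) + 1) + (k + (k - Suc j)) < 3 * k * d"
proof -
  obtain i n e where "j = Suc i" "k = i + 2 + n" "d = Suc e"
    using assms by (metis Suc_pred' add.commute le_add_diff_inverse2 le_less_Suc_eq
        less_eq_Suc_le not_less_eq_eq plus_1_eq_Suc add_2_eq_Suc)
  then show ?thesis
    by (simp add: algebra_simps)
qed

lemma rainbow_path_through_prefix:
  assumes conn: "kd_connected V E cv ce (3 * k * d) d A"
    and "0 < d" and "A \<subseteq> V"
    and "finite S" and card_S: "card S \<le> k"
    and a_in_A: "\<forall>i \<in> {1..k}. a i \<in> A"
    and a_not_S: "\<forall>i \<in> {1..k}. cv (a i) \<notin> S"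
    and a_colours: "\<forall>i \<in> {1..k}. \<forall>j \<in> {1..k}. i \<noteq> j \<longrightarrow> cv (a i) \<noteq> cv (a j)"
    and "1 \<le> j" "j \<le> k"
  shows "\<exists>P. path_from_to V E P (a 1) (a j) \<and> rainbow cv ce P
            \<and> path_length P \<le> (j - 1) * d \<and> a ` {1..j} \<subseteq> set P
            \<and> path_colours cv ce P \<inter> (S \<union> (\<lambda>i. cv (a i)) ` {j<..k}) = {}"
  using \<open>1 \<le> j\<close> \<open>j \<le> k\<close>
proof (induction j rule: nat_induct_at_least)
  case base
  have "a 1 \<in> V"
    using a_in_A \<open>A \<subseteq> V\<close> base by auto
  moreover have "path_colours cv ce [a 1] = {cv (a 1)}"
    by (simp add: path_colours_def)
  ultimately show ?case
    using a_not_S a_colours base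
    by (intro exI[of _ "[a 1]"]) (auto simp: path_from_to_def is_path_def rainbow_def path_length_def)
next
  case (Suc j)
  define R where "R = S \<union> (\<lambda>i. cv (a i)) ` {Suc j<..k}"
  obtain P where P: "path_from_to V E P (a 1) (a j)" "rainbow cv ce P"
    and len_P: "path_length P \<le> (j - 1) * d" and a_in_P: "a ` {1..j} \<subseteq> set P"
    and P_avoids: "path_colours cv ce P \<inter> (S \<union> (\<lambda>i. cv (a i)) ` {j<..k}) = {}"
    using Suc by auto
  have "card R \<le> k + (k - Suc j)"
    using card_Un_le[of S "(\<lambda>i. cv (a i)) ` {Suc j<..k}"]
      card_image_le[of "{Suc j<..k}" "\<lambda>i. cv (a i)"] card_S
    unfolding R_def by simp
  moreover have "card (path_colours cv ce P) \<le> 2 * ((j - 1) * d) + 1"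
    using card_path_colours_le[of cv ce P] len_P by simp
  ultimately have "card (path_colours cv ce P) + card R < 3 * k * d"
    using colour_budget[OF Suc.hyps Suc.prems \<open>0 < d\<close>] by linarith
  moreover have "cv (a (Suc j)) \<notin> path_colours cv ce P"
    using P_avoids Suc.prems by auto
  ultimately obtain P' where P': "path_from_to V E P' (a 1) (a (Suc j))" "rainbow cv ce P'"
    and "path_length P' \<le> path_length P + d" "set P \<subseteq> set P'" "a (Suc j) \<in> set P'"
    and colours_P': "path_colours cv ce P' \<subseteq> path_colours cv ce P \<union> {cv (a (Suc j))} \<union> - R"
    using kd_connected_extend_path[OF conn P, of "a (Suc j)" R] a_in_A Suc \<open>finite S\<close>
    unfolding R_def by auto
  have "cv (a (Suc j)) \<notin> R"
    using a_not_S a_colours Suc unfolding R_def by auto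
  moreover have "R \<subseteq> S \<union> (\<lambda>i. cv (a i)) ` {j<..k}"
    unfolding R_def by auto
  ultimately have "path_colours cv ce P' \<inter> R = {}"
    using colours_P' P_avoids by blast
  moreover have "path_length P' \<le> (Suc j - 1) * d"
    using \<open>path_length P' \<le> path_length P + d\<close> len_P Suc.hyps by (cases j) auto
  moreover have "a ` {1..Suc j} \<subseteq> set P'"
    using a_in_P \<open>set P \<subseteq> set P'\<close> \<open>a (Suc j) \<in> set P'\<close> Suc.hyps
    by (auto simp: atLeastAtMostSuc_conv)
  ultimately show ?case
    using P' unfolding R_def by blast
qed

theorem mainTheorem4:
  fixes V :: "'a set" and E :: "('a \<times> 'a) set"
    and cv :: "'a \<Rightarrow> 'c" and ce :: "'a \<times> 'a \<Rightarrow> 'c"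
    and k d :: nat and A :: "'a set" and S :: "'c set" and a :: "nat \<Rightarrow> 'a"
  assumes "digraph V E"
    and "0 < k" and "0 < d"
    and "A \<subseteq> V"
    and "kd_connected V E cv ce (3 * k * d) d A"
    and "finite S" and "card S \<le> k"
    and "\<forall>i \<in> {1..k}. a i \<in> A"
    and "\<forall>i \<in> {1..k}. cv (a i) \<notin> S"
    and "\<forall>i \<in> {1..k}. \<forall>j \<in> {1..k}. i \<noteq> j \<longrightarrow> cv (a i) \<noteq> cv (a j)"
  shows "\<exists>P. path_from_to V E P (a 1) (a k) \<and> rainbow cv ce P \<and> path_length P \<le> k * d
            \<and> (\<forall>i \<in> {1..k}. a i \<in> set P)
            \<and> (\<forall>v \<in> set P. cv v \<notin> S) \<and> (\<forall>e \<in> set (path_edges P). ce e \<notin> S)"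
proof -
  obtain P where "path_from_to V E P (a 1) (a k)" "rainbow cv ce P"
    and len: "path_length P \<le> (k - 1) * d" and "a ` {1..k} \<subseteq> set P"
    and "path_colours cv ce P \<inter> S = {}"
    using rainbow_path_through_prefix[OF assms(5,3,4,6-10), of k] \<open>0 < k\<close> by auto
  moreover have "path_length P \<le> k * d"
    using len by (meson diff_le_self mult_le_mono1 order_trans)
  ultimately show ?thesis
    unfolding path_colours_def by (intro exI[of _ P]) auto
qed

end
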